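(* For any $u,v\in\mathbb{R}^d$, \[ \{\langle u, Bv\rangle : B\in \mathbb{B}^u_d\} = \{\langle u, Bv\rangle : B\in \mathbb{B}_d\} = \big[\langle u^\downarrow, v^\uparrow\rangle,\ \langle u^\downarrow, v^\downarrow\rangle\big]. \]
   Context: $\langle u,v\rangle=\sum_j u_jv_j$ for real vectors. For $u\in\mathbb{R}^d$, $u^\downarrow$ (resp. $u^\uparrow$) is the vector with the same entries rearranged in decreasing (resp. increasing) order. $\mathbb{B}_d$ is the set of $d\times d$ bistochastic (doubly stochastic) matrices: real matrices with nonnegative entries whose rows and columns each sum to $1$. $\mathbb{B}^u_d\subseteq\mathbb{B}_d$ is the set of unistochastic matrices, i.e. matrices of the form $[\,|U_{ij}|^2\,]_{i,j}$ for some $d\times d$ unitary matrix $U$. *)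

theory Defs
  imports "HOL-Analysis.Analysis" "HOL-Library.Multiset"
begin

definition bistochastic :: "real^'n^'n \<Rightarrow> bool" where
  "bistochastic B \<longleftrightarrow> (\<forall>i j. B$i$j \<ge> 0) \<and> (\<forall>i. (\<Sum>j\<in>UNIV. B$i$j) = 1) \<and> (\<forall>j. (\<Sum>i\<in>UNIV. B$i$j) = 1)"

definition conj_transpose :: "complex^'n^'n \<Rightarrow> complex^'n^'n" where
  "conj_transpose U = (\<chi> i j. cnj (U$j$i))"

definition unitary :: "complex^'n^'n \<Rightarrow> bool" where
  "unitary U \<longleftrightarrow> U ** conj_transpose U = mat 1 \<and> conj_transpose U ** U = mat 1"

definition unistochastic :: "real^'n^'n \<Rightarrow> bool" where
  "unistochastic B \<longleftrightarrow> (\<exists>U::complex^'n^'n. unitary U \<and> (\<forall>i j. B$i$j = (cmod (U$i$j))^2))"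

definition entries_up :: "real^'n \<Rightarrow> real list" where
  "entries_up u = sorted_list_of_multiset (image_mset (\<lambda>i. u$i) (mset_set (UNIV::'n set)))"

definition entries_down :: "real^'n \<Rightarrow> real list" where
  "entries_down u = rev (entries_up u)"

definition list_inner :: "real list \<Rightarrow> real list \<Rightarrow> real" where
  "list_inner xs ys = sum_list (map2 (*) xs ys)"

end

theory Submission
  imports Defs "HOL-Combinatorics.Permutations"
begin

(*
  Unistochastic matrices are bistochastic, so it suffices to bound the bistochastic values and
  to reach the whole interval with unistochastic ones.
  For the bound, order the coordinates so that a = u\<down> and b = v\<down> are decreasing; the numbers y k
  of rearrangement_potential satisfy a k * b l \<le> (a k * b k - y k) + y l, a feasible dual
  solution of the assignment problem, and pairing it with the row and column sums of B gives
  \<langle>u, B v\<rangle> \<le> \<Sum>k. a k * b k. Replacing v by -v gives the lower bound.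
  For the converse, a Givens rotation in the (a, b)-plane with cosine sqrt (1 - t), composed with
  a permutation matrix P \<sigma>, is orthogonal, and its squared entries form
  (1 - t) P \<sigma> + t P (\<sigma> \<circ> (a b)). Hence the unistochastic values contain the segment between
  the values at \<sigma> and at \<sigma> \<circ> (a b); writing a permutation as a product of transpositions
  chains these segments from the permutation realising \<langle>u\<down>, v\<up>\<rangle> to the one realising \<langle>u\<down>, v\<down>\<rangle>.
*)

lemma bistochasticD:
  assumes "bistochastic B"
  shows "B$i$j \<ge> 0" "(\<Sum>j\<in>UNIV. B$i$j) = 1" "(\<Sum>i\<in>UNIV. B$i$j) = 1"
  using assms unfolding bistochastic_def by auto

lemma unistochastic_imp_bistochastic:
  fixes B :: "real^'n^'n"
  assumes "unistochastic B"
  shows "bistochastic B"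
proof -
  obtain U :: "complex^'n^'n" where U: "unitary U" and BU: "\<And>i j. B$i$j = (cmod (U$i$j))^2"
    using assms unfolding unistochastic_def by blast
  have rows: "(\<Sum>j\<in>UNIV. B$i$j) = 1" for i
  proof -
    have "complex_of_real (\<Sum>j\<in>UNIV. B$i$j) = (\<Sum>j\<in>UNIV. U$i$j * cnj (U$i$j))"
      unfolding BU of_real_sum complex_norm_square ..
    also have "\<dots> = (U ** conj_transpose U) $ i $ i"
      by (simp add: matrix_matrix_mult_def conj_transpose_def)
    also have "\<dots> = 1" using U unfolding unitary_def by (simp add: mat_def)
    finally show ?thesis by (metis of_real_eq_1_iff)
  qed
  have cols: "(\<Sum>i\<in>UNIV. B$i$j) = 1" for j
  proof -
    have "complex_of_real (\<Sum>i\<in>UNIV. B$i$j) = (\<Sum>i\<in>UNIV. cnj (U$i$j) * U$i$j)"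
      unfolding BU of_real_sum complex_norm_square by (simp add: mult.commute)
    also have "\<dots> = (conj_transpose U ** U) $ j $ j"
      by (simp add: matrix_matrix_mult_def conj_transpose_def)
    also have "\<dots> = 1" using U unfolding unitary_def by (simp add: mat_def)
    finally show ?thesis by (metis of_real_eq_1_iff)
  qed
  show ?thesis unfolding bistochastic_def using rows cols BU by simp
qed

primrec rearrangement_potential :: "(nat \<Rightarrow> real) \<Rightarrow> (nat \<Rightarrow> real) \<Rightarrow> nat \<Rightarrow> real" where
  "rearrangement_potential a b 0 = 0"
| "rearrangement_potential a b (Suc l) =
     rearrangement_potential a b l - a (Suc l) * (b l - b (Suc l))"

lemma rearrangement_potential_diff_ge:
  fixes a b :: "nat \<Rightarrow> real"
  assumes a: "antimono_on {..<n} a" and b: "antimono_on {..<n} b" and "k \<le> l" "l < n"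
  shows "a k * (b l - b k) \<le> rearrangement_potential a b l - rearrangement_potential a b k"
  using \<open>k \<le> l\<close> \<open>l < n\<close>
proof (induction l rule: dec_induct)
  case base
  then show ?case by simp
next
  case (step l)
  have "a (Suc l) \<le> a k" "b (Suc l) \<le> b l"
    using step by (auto intro!: monotone_onD[OF a] monotone_onD[OF b])
  then have "a (Suc l) * (b l - b (Suc l)) \<le> a k * (b l - b (Suc l))"
    by (intro mult_right_mono) auto
  then show ?case using step by (simp add: algebra_simps)
qed

lemma rearrangement_potential_diff_ge_rev:
  fixes a b :: "nat \<Rightarrow> real"
  assumes a: "antimono_on {..<n} a" and b: "antimono_on {..<n} b" and "l \<le> k" "k < n"
  shows "a k * (b l - b k) \<le> rearrangement_potential a b l - rearrangement_potential a b k"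
  using \<open>l \<le> k\<close> \<open>k < n\<close>
proof (induction k rule: dec_induct)
  case base
  then show ?case by simp
next
  case (step k)
  have "a (Suc k) \<le> a k" "b k \<le> b l"
    using step by (auto intro!: monotone_onD[OF a] monotone_onD[OF b])
  then have "a (Suc k) * (b l - b k) \<le> a k * (b l - b k)"
    by (intro mult_right_mono) auto
  then show ?case using step by (simp add: algebra_simps)
qed

lemma mult_le_rearrangement_potential:
  fixes a b :: "nat \<Rightarrow> real"
  assumes "antimono_on {..<n} a" "antimono_on {..<n} b" "k < n" "l < n"
  shows "a k * b l
       \<le> (a k * b k - rearrangement_potential a b k) + rearrangement_potential a b l"
proof -
  have "a k * (b l - b k) \<le> rearrangement_potential a b l - rearrangement_potential a b k"
    using assms rearrangement_potential_diff_ge rearrangement_potential_diff_ge_rev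
    by (cases "k \<le> l") auto
  then show ?thesis by (simp add: algebra_simps)
qed

lemma antimono_on_nth_sorted_desc:
  fixes f :: "'a \<Rightarrow> 'b::order"
  assumes "sorted_wrt (\<ge>) (map f xs)"
  shows "antimono_on {..<length xs} (\<lambda>k. f (xs ! k))"
proof (rule monotone_onI)
  fix k l assume "k \<in> {..<length xs}" "l \<in> {..<length xs}" "k \<le> l"
  then show "f (xs ! k) \<ge> f (xs ! l)"
    using assms by (cases "k = l") (auto simp: sorted_wrt_iff_nth_less)
qed

lemma inner_bistochastic_le_dual:
  fixes u w :: "real^'n" and X Y :: "'n \<Rightarrow> real"
  assumes B: "bistochastic B" and dual: "\<And>i j. u$i * w$j \<le> X i + Y j"
  shows "u \<bullet> (B *v w) \<le> sum X UNIV + sum Y UNIV"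
proof -
  have "u \<bullet> (B *v w) = (\<Sum>i\<in>UNIV. \<Sum>j\<in>UNIV. B$i$j * (u$i * w$j))"
    by (simp add: inner_vec_def matrix_vector_mult_def sum_distrib_left mult_ac)
  also have "\<dots> \<le> (\<Sum>i\<in>UNIV. \<Sum>j\<in>UNIV. B$i$j * (X i + Y j))"
    by (intro sum_mono mult_left_mono dual bistochasticD(1)[OF B])
  also have "\<dots> = (\<Sum>i\<in>UNIV. X i * (\<Sum>j\<in>UNIV. B$i$j)) + (\<Sum>j\<in>UNIV. Y j * (\<Sum>i\<in>UNIV. B$i$j))"
  proof -
    have "(\<Sum>i\<in>UNIV. \<Sum>j\<in>UNIV. Y j * B$i$j) = (\<Sum>j\<in>UNIV. Y j * (\<Sum>i\<in>UNIV. B$i$j))"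
      by (subst sum.swap) (simp add: sum_distrib_left)
    then show ?thesis
      by (simp add: distrib_left sum.distrib sum_distrib_left mult_ac)
  qed
  also have "\<dots> = sum X UNIV + sum Y UNIV"
    using bistochasticD[OF B] by simp
  finally show ?thesis .
qed

definition enum_index :: "'a list \<Rightarrow> 'a \<Rightarrow> nat" where
  "enum_index e = inv_into {..<length e} ((!) e)"

lemma bij_betw_nth_UNIV:
  assumes "distinct e" "set e = UNIV"
  shows "bij_betw ((!) e) {..<length e} UNIV"
  using bij_betw_nth assms by blast

lemma enum_index:
  assumes "distinct e" "set e = UNIV"
  shows "e ! enum_index e i = i" "enum_index e i < length e"
    "k < length e \<Longrightarrow> enum_index e (e ! k) = k"
proof -
  have bij: "bij_betw ((!) e) {..<length e} UNIV"
    using bij_betw_nth_UNIV[OF assms] .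
  show "e ! enum_index e i = i" "k < length e \<Longrightarrow> enum_index e (e ! k) = k"
    unfolding enum_index_def using bij by (simp_all add: bij_betw_inv_into_right bij_betw_inv_into_left)
  show "enum_index e i < length e"
    unfolding enum_index_def using bij by (metis UNIV_I bij_betw_def inv_into_into lessThan_iff)
qed

lemma sum_UNIV_enum:
  assumes "distinct e" "set e = (UNIV :: 'a::finite set)"
  shows "sum g UNIV = (\<Sum>k<length e. g (e ! k))"
  using sum.reindex_bij_betw[OF bij_betw_nth_UNIV[OF assms], of g] by simp

lemma length_enum:
  assumes "distinct e" "set e = (UNIV :: 'a::finite set)"
  shows "length e = CARD('a)"
  using distinct_card assms by metis

lemma list_inner_map_nth:
  assumes "length xs = length ys"
  shows "list_inner (map f xs) (map g ys) = (\<Sum>k<length xs. f (xs ! k) * g (ys ! k))"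
  using assms unfolding list_inner_def by (simp add: sum_list_sum_nth atLeast0LessThan)

lemma inner_bistochastic_le_sorted:
  fixes u w :: "real^'n"
  assumes B: "bistochastic B"
    and eu: "distinct eu" "set eu = UNIV" and ew: "distinct ew" "set ew = UNIV"
    and su: "sorted_wrt (\<ge>) (map (($) u) eu)" and sw: "sorted_wrt (\<ge>) (map (($) w) ew)"
  shows "u \<bullet> (B *v w) \<le> list_inner (map (($) u) eu) (map (($) w) ew)"
proof -
  define n where "n = length eu"
  have len: "length ew = n"
    unfolding n_def length_enum[OF eu] length_enum[OF ew] ..
  define a where "a k = u $ (eu ! k)" for k
  define b where "b k = w $ (ew ! k)" for k
  define y where "y = rearrangement_potential a b"
  have mono: "antimono_on {..<n} a" "antimono_on {..<n} b"
    using antimono_on_nth_sorted_desc[OF su] antimono_on_nth_sorted_desc[OF sw] len n_def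
    unfolding a_def b_def by simp_all
  define X where "X i = a (enum_index eu i) * b (enum_index eu i) - y (enum_index eu i)" for i
  define Y where "Y j = y (enum_index ew j)" for j
  have "u$i * w$j \<le> X i + Y j" for i j
  proof -
    have "u$i = a (enum_index eu i)" "w$j = b (enum_index ew j)"
      by (simp_all add: a_def b_def enum_index(1)[OF eu] enum_index(1)[OF ew])
    moreover have "enum_index eu i < n" "enum_index ew j < n"
      using enum_index(2)[OF eu] enum_index(2)[OF ew] len n_def by auto
    ultimately show ?thesis
      unfolding X_def Y_def y_def using mult_le_rearrangement_potential[OF mono] by simp
  qed
  then have "u \<bullet> (B *v w) \<le> sum X UNIV + sum Y UNIV"
    by (rule inner_bistochastic_le_dual[OF B])
  also have "\<dots> = (\<Sum>k<n. a k * b k - y k) + (\<Sum>k<n. y k)"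
    unfolding sum_UNIV_enum[OF eu, of X] sum_UNIV_enum[OF ew, of Y] X_def Y_def
    using enum_index(3)[OF eu] enum_index(3)[OF ew] len n_def by simp
  also have "\<dots> = list_inner (map (($) u) eu) (map (($) w) ew)"
    using list_inner_map_nth[of eu ew] len
    by (simp add: n_def a_def b_def sum_subtractf)
  finally show ?thesis .
qed

lemma sorted_enumeration_exists:
  fixes f :: "'a::finite \<Rightarrow> 'b::linorder"
  obtains e where "distinct e" "set e = UNIV" "sorted (map f e)"
proof -
  obtain e0 :: "'a list" where "set e0 = UNIV" "distinct e0"
    using finite_distinct_list[OF finite_class.finite_UNIV] by blast
  then show ?thesis
    using that[of "sort_key f e0"] by (simp add: sorted_sort_key)
qed

lemma entries_enumeration:
  fixes f :: "real^'n"
  obtains e where "distinct e" "set e = UNIV" "sorted (map (($) f) e)"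
    "entries_up f = map (($) f) e" "entries_down f = map (($) f) (rev e)"
proof -
  obtain e where e: "distinct e" "set e = UNIV" "sorted (map (($) f) e)"
    by (rule sorted_enumeration_exists)
  have "image_mset (($) f) (mset_set UNIV) = mset (map (($) f) e)"
    using e by (simp add: mset_set_set[OF e(1), symmetric])
  then have "entries_up f = sorted_list_of_multiset (mset (map (($) f) e))"
    unfolding entries_up_def by (rule arg_cong)
  also have "\<dots> = map (($) f) e"
    by (simp only: sorted_list_of_multiset_mset sorted_sort_id[OF e(3)])
  finally have "entries_up f = map (($) f) e" .
  with e show ?thesis
    using that by (simp add: entries_down_def rev_map)
qed

lemma list_inner_uminus_right: "list_inner xs (map uminus ys) = - list_inner xs ys"
  by (induction xs ys rule: list_induct2') (simp_all add: list_inner_def)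

lemma bistochastic_values_subset_interval:
  fixes u v :: "real^'n"
  shows "{u \<bullet> (B *v v) | B. bistochastic B}
       \<subseteq> {list_inner (entries_down u) (entries_up v) .. list_inner (entries_down u) (entries_down v)}"
proof
  fix x assume "x \<in> {u \<bullet> (B *v v) | B. bistochastic B}"
  then obtain B where B: "bistochastic B" and x: "x = u \<bullet> (B *v v)"
    by blast
  obtain eu where eu: "distinct eu" "set eu = UNIV" "sorted (map (($) u) eu)"
    "entries_down u = map (($) u) (rev eu)"
    by (rule entries_enumeration)
  obtain ev where ev: "distinct ev" "set ev = UNIV" "sorted (map (($) v) ev)"
    "entries_up v = map (($) v) ev" "entries_down v = map (($) v) (rev ev)"
    by (rule entries_enumeration)
  have desc_u: "sorted_wrt (\<ge>) (map (($) u) (rev eu))"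
    using eu(3) by (simp add: rev_map[symmetric] sorted_wrt_rev)
  have desc_v: "sorted_wrt (\<ge>) (map (($) v) (rev ev))"
    using ev(3) by (simp add: rev_map[symmetric] sorted_wrt_rev)
  have desc_neg_v: "sorted_wrt (\<ge>) (map (($) (-v)) ev)"
    using ev(3) by (simp add: sorted_wrt_map)
  have upper: "x \<le> list_inner (entries_down u) (entries_down v)"
    unfolding x eu(4) ev(5)
    using inner_bistochastic_le_sorted[OF B _ _ _ _ desc_u desc_v] eu ev by simp
  have "- (u \<bullet> (B *v v)) \<le> list_inner (map (($) u) (rev eu)) (map (($) (-v)) ev)"
    using inner_bistochastic_le_sorted[OF B _ _ _ _ desc_u desc_neg_v] eu ev
    by (simp add: vec.neg)
  moreover have "list_inner (map (($) u) (rev eu)) (map (($) (-v)) ev)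
      = - list_inner (entries_down u) (entries_up v)"
  proof -
    have neg_map: "map (($) (-v)) ev = map uminus (map (($) v) ev)"
      by (simp add: map_eq_conv)
    show ?thesis
      unfolding eu(4) ev(4) neg_map list_inner_uminus_right ..
  qed
  ultimately have lower: "list_inner (entries_down u) (entries_up v) \<le> x"
    unfolding x by linarith
  from lower upper show "x \<in> {list_inner (entries_down u) (entries_up v) .. list_inner (entries_down u) (entries_down v)}"
    by simp
qed

lemma unitary_of_real_orthogonal:
  assumes "orthogonal_matrix Q"
  shows "unitary (\<chi> i j. complex_of_real (Q$i$j))"
proof -
  let ?U = "\<chi> i j. complex_of_real (Q$i$j)"
  have "?U ** conj_transpose ?U = (\<chi> i j. complex_of_real ((Q ** transpose Q)$i$j))"
   and "conj_transpose ?U ** ?U = (\<chi> i j. complex_of_real ((transpose Q ** Q)$i$j))"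
    by (simp_all add: vec_eq_iff matrix_matrix_mult_def conj_transpose_def transpose_def of_real_sum)
  with assms show ?thesis
    unfolding unitary_def orthogonal_matrix_def by (simp add: vec_eq_iff mat_def)
qed

lemma unistochastic_of_orthogonal:
  assumes "orthogonal_matrix Q"
  shows "unistochastic (\<chi> i j. (Q$i$j)^2)"
  unfolding unistochastic_def using unitary_of_real_orthogonal[OF assms] by fastforce

definition perm_matrix :: "('n \<Rightarrow> 'n) \<Rightarrow> real^'n^'n" where
  "perm_matrix \<sigma> = (\<chi> i j. of_bool (j = \<sigma> i))"

lemma perm_matrix_mult_vec: "(perm_matrix \<sigma> *v v) $ i = v $ \<sigma> i"
  unfolding perm_matrix_def matrix_vector_mult_def by (simp add: if_distrib cong: if_cong)

lemma inner_perm_matrix: "u \<bullet> (perm_matrix \<sigma> *v v) = (\<Sum>i\<in>UNIV. u$i * v$\<sigma> i)"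
  by (simp add: inner_vec_def perm_matrix_mult_vec)

lemma matrix_mult_perm_matrix:
  assumes "\<sigma> permutes UNIV"
  shows "(A ** perm_matrix \<sigma>) $ i $ j = A $ i $ inv \<sigma> j"
proof -
  have "(A ** perm_matrix \<sigma>) $ i $ j = (\<Sum>k\<in>UNIV. A$i$k * of_bool (j = \<sigma> k))"
    by (simp add: matrix_matrix_mult_def perm_matrix_def)
  also have "\<dots> = (\<Sum>k\<in>UNIV. if k = inv \<sigma> j then A$i$k else 0)"
    by (rule sum.cong) (auto simp: permutes_inv_eq[OF assms] permutes_inverses[OF assms])
  finally show ?thesis by simp
qed

lemma orthogonal_matrix_perm_matrix:
  assumes "\<sigma> permutes UNIV"
  shows "orthogonal_matrix (perm_matrix \<sigma>)"
  unfolding orthogonal_matrix vec_eq_iff matrix_mult_perm_matrix[OF assms]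
  by (simp add: transpose_def perm_matrix_def mat_def permutes_inverses[OF assms])

lemma unistochastic_perm_matrix:
  assumes "\<sigma> permutes UNIV"
  shows "unistochastic (perm_matrix \<sigma>)"
proof -
  have "(\<chi> i j. (perm_matrix \<sigma> $ i $ j)^2) = perm_matrix \<sigma>"
    by (simp add: vec_eq_iff perm_matrix_def)
  then show ?thesis
    using unistochastic_of_orthogonal[OF orthogonal_matrix_perm_matrix[OF assms]] by simp
qed

definition givens_rotation :: "'n \<Rightarrow> 'n \<Rightarrow> real \<Rightarrow> real \<Rightarrow> real^'n^'n" where
  "givens_rotation a b c s = (\<chi> i k.
     if i = a then (if k = a then c else if k = b then s else 0)
     else if i = b then (if k = a then -s else if k = b then c else 0)
     else of_bool (i = k))"

lemma orthogonal_matrix_givens_rotation: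
  fixes a b :: "'n::finite"
  assumes "a \<noteq> b" "c^2 + s^2 = 1"
  shows "orthogonal_matrix (givens_rotation a b c s)"
proof -
  let ?G = "givens_rotation a b c s"
  have "(transpose ?G ** ?G) $ i $ k = of_bool (i = k)" for i k
  proof -
    have "(transpose ?G ** ?G) $ i $ k = (\<Sum>m\<in>UNIV. ?G$m$i * ?G$m$k)"
      by (simp add: matrix_matrix_mult_def transpose_def)
    also have "\<dots> = (\<Sum>m\<in>UNIV - {a,b}. ?G$m$i * ?G$m$k) + ?G$a$i * ?G$a$k + ?G$b$i * ?G$b$k"
      using assms(1) by (simp add: sum.subset_diff[of "{a,b}" UNIV])
    also have "(\<Sum>m\<in>UNIV - {a,b}. ?G$m$i * ?G$m$k)
             = (\<Sum>m\<in>UNIV - {a,b}. if m = i then of_bool (i = k) else 0)"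
      by (rule sum.cong) (auto simp: givens_rotation_def)
    finally show ?thesis
      using assms by (auto simp: givens_rotation_def power2_eq_square algebra_simps)
  qed
  then show ?thesis
    unfolding orthogonal_matrix by (simp add: vec_eq_iff mat_def)
qed

lemma givens_rotation_entry_sq:
  assumes "a \<noteq> b" "0 \<le> t" "t \<le> 1"
  shows "(givens_rotation a b (sqrt (1-t)) (sqrt t) $ i $ k)^2
       = (1-t) * of_bool (k = i) + t * of_bool (k = Transposition.transpose a b i)"
  using assms by (auto simp: givens_rotation_def Transposition.transpose_def)

lemma unistochastic_perm_matrix_combination:
  fixes \<sigma> :: "'n::finite \<Rightarrow> 'n"
  assumes \<sigma>: "\<sigma> permutes UNIV" and "a \<noteq> b" "0 \<le> t" "t \<le> 1"
  shows "unistochastic ((1-t) *\<^sub>R perm_matrix \<sigma> + t *\<^sub>R perm_matrix (\<sigma> \<circ> Transposition.transpose a b))"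
proof -
  let ?Q = "givens_rotation a b (sqrt (1-t)) (sqrt t) ** perm_matrix \<sigma>"
  have "orthogonal_matrix ?Q"
    using assms by (intro orthogonal_matrix_mul orthogonal_matrix_givens_rotation
        orthogonal_matrix_perm_matrix) auto
  moreover have "(?Q$i$j)^2 = (1-t) * of_bool (j = \<sigma> i) + t * of_bool (j = \<sigma> (Transposition.transpose a b i))"
    for i j
    using assms
    by (simp add: matrix_mult_perm_matrix[OF \<sigma>] givens_rotation_entry_sq permutes_inv_eq[OF \<sigma>])
  then have "(\<chi> i j. (?Q$i$j)^2)
      = (1-t) *\<^sub>R perm_matrix \<sigma> + t *\<^sub>R perm_matrix (\<sigma> \<circ> Transposition.transpose a b)"
    by (simp add: vec_eq_iff perm_matrix_def)
  ultimately show ?thesis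
    using unistochastic_of_orthogonal by metis
qed

lemma closed_segment_transposition_subset_unistochastic_values:
  fixes u v :: "real^'n"
  assumes "\<sigma> permutes UNIV" "a \<noteq> b"
  shows "closed_segment (u \<bullet> (perm_matrix \<sigma> *v v)) (u \<bullet> (perm_matrix (\<sigma> \<circ> Transposition.transpose a b) *v v))
         \<subseteq> {u \<bullet> (B *v v) | B. unistochastic B}"
proof
  fix x assume "x \<in> closed_segment (u \<bullet> (perm_matrix \<sigma> *v v)) (u \<bullet> (perm_matrix (\<sigma> \<circ> Transposition.transpose a b) *v v))"
  then obtain t where t: "0 \<le> t" "t \<le> 1"
    and x: "x = (1-t) * (u \<bullet> (perm_matrix \<sigma> *v v)) + t * (u \<bullet> (perm_matrix (\<sigma> \<circ> Transposition.transpose a b) *v v))"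
    unfolding closed_segment_def by auto
  have "x = u \<bullet> (((1-t) *\<^sub>R perm_matrix \<sigma> + t *\<^sub>R perm_matrix (\<sigma> \<circ> Transposition.transpose a b)) *v v)"
    unfolding x
    by (simp add: matrix_vector_mult_add_rdistrib scaleR_matrix_vector_assoc[symmetric] inner_add_right)
  then show "x \<in> {u \<bullet> (B *v v) | B. unistochastic B}"
    using unistochastic_perm_matrix_combination[OF assms t] by blast
qed

lemma closed_segment_permutes_subset:
  fixes f :: "('a \<Rightarrow> 'a) \<Rightarrow> real"
  assumes "finite S"
    and vertex: "\<And>\<sigma>. \<sigma> permutes S \<Longrightarrow> f \<sigma> \<in> T"
    and edge: "\<And>\<sigma> a b. \<sigma> permutes S \<Longrightarrow> a \<in> S \<Longrightarrow> b \<in> S \<Longrightarrow> a \<noteq> b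
                 \<Longrightarrow> closed_segment (f \<sigma>) (f (\<sigma> \<circ> Transposition.transpose a b)) \<subseteq> T"
    and \<sigma>: "\<sigma> permutes S" and \<tau>: "\<tau> permutes S"
  shows "closed_segment (f \<sigma>) (f \<tau>) \<subseteq> T"
proof -
  have "closed_segment (f \<sigma>) (f (\<sigma> \<circ> p)) \<subseteq> T" if "p permutes S" "\<sigma> permutes S" for p \<sigma>
    using that(1) \<open>finite S\<close> that(2)
  proof (induction p arbitrary: \<sigma> rule: permutes_induct)
    case id
    then show ?case using vertex by simp
  next
    case (swap a b p)
    have "\<sigma> \<circ> Transposition.transpose a b permutes S"
      using swap by (intro permutes_compose permutes_swap_id)
    then have "closed_segment (f (\<sigma> \<circ> Transposition.transpose a b)) (f (\<sigma> \<circ> (Transposition.transpose a b \<circ> p))) \<subseteq> T"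
      unfolding o_assoc by (rule swap.IH)
    moreover have "closed_segment (f \<sigma>) (f (\<sigma> \<circ> Transposition.transpose a b)) \<subseteq> T"
      using edge swap by blast
    moreover have "closed_segment x z \<subseteq> closed_segment x y \<union> closed_segment y z" for x y z :: real
      unfolding closed_segment_eq_real_ivl by auto
    ultimately show ?case by blast
  qed
  moreover have "inv \<sigma> \<circ> \<tau> permutes S"
    using \<sigma> \<tau> by (intro permutes_compose permutes_inv)
  moreover have "\<sigma> \<circ> (inv \<sigma> \<circ> \<tau>) = \<tau>"
    by (simp add: fun_eq_iff permutes_inverses[OF \<sigma>])
  ultimately show ?thesis using \<sigma> by metis
qed

lemma enum_transfer_permutes:
  fixes eu e :: "'n::finite list"
  assumes eu: "distinct eu" "set eu = UNIV" and e: "distinct e" "set e = UNIV"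
  shows "(\<lambda>i. e ! enum_index eu i) permutes UNIV"
proof -
  have "bij_betw (enum_index eu) UNIV {..<length eu}"
    unfolding enum_index_def by (rule bij_betw_inv_into[OF bij_betw_nth_UNIV[OF eu]])
  moreover have "bij_betw ((!) e) {..<length eu} UNIV"
    using bij_betw_nth_UNIV[OF e] length_enum[OF eu] length_enum[OF e] by simp
  ultimately have "bij ((!) e \<circ> enum_index eu)"
    by (rule bij_betw_trans)
  then show ?thesis
    by (intro bij_imp_permutes) (simp_all add: comp_def)
qed

lemma inner_perm_matrix_enum_transfer:
  fixes u v :: "real^'n" and eu e :: "'n list"
  assumes eu: "distinct eu" "set eu = UNIV" and e: "distinct e" "set e = UNIV"
  shows "u \<bullet> (perm_matrix (\<lambda>i. e ! enum_index eu i) *v v)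
       = list_inner (map (($) u) eu) (map (($) v) e)"
proof -
  have "u \<bullet> (perm_matrix (\<lambda>i. e ! enum_index eu i) *v v)
      = (\<Sum>k<length eu. u$(eu!k) * v$(e ! enum_index eu (eu!k)))"
    unfolding inner_perm_matrix by (rule sum_UNIV_enum[OF eu])
  also have "\<dots> = (\<Sum>k<length eu. u$(eu!k) * v$(e ! k))"
    using enum_index(3)[OF eu] by simp
  also have "\<dots> = list_inner (map (($) u) eu) (map (($) v) e)"
    using length_enum[OF eu] length_enum[OF e] by (simp add: list_inner_map_nth)
  finally show ?thesis .
qed

lemma interval_subset_unistochastic_values:
  fixes u v :: "real^'n"
  shows "{list_inner (entries_down u) (entries_up v) .. list_inner (entries_down u) (entries_down v)}
       \<subseteq> {u \<bullet> (B *v v) | B. unistochastic B}"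
proof -
  obtain eu where eu: "distinct eu" "set eu = UNIV" "entries_down u = map (($) u) (rev eu)"
    by (rule entries_enumeration)
  obtain ev where ev: "distinct ev" "set ev = UNIV"
    "entries_up v = map (($) v) ev" "entries_down v = map (($) v) (rev ev)"
    by (rule entries_enumeration)
  have eu': "distinct (rev eu)" "set (rev eu) = UNIV" and ev': "distinct (rev ev)" "set (rev ev) = UNIV"
    using eu ev by simp_all
  let ?f = "\<lambda>\<sigma>. u \<bullet> (perm_matrix \<sigma> *v v)"
  let ?\<sigma>min = "\<lambda>i. ev ! enum_index (rev eu) i"
  let ?\<sigma>max = "\<lambda>i. rev ev ! enum_index (rev eu) i"
  have "?f ?\<sigma>min = list_inner (entries_down u) (entries_up v)"
    unfolding eu(3) ev(3) by (rule inner_perm_matrix_enum_transfer[OF eu' ev(1,2)])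
  moreover have "?f ?\<sigma>max = list_inner (entries_down u) (entries_down v)"
    unfolding eu(3) ev(4) by (rule inner_perm_matrix_enum_transfer[OF eu' ev'])
  moreover have "closed_segment (?f ?\<sigma>min) (?f ?\<sigma>max) \<subseteq> {u \<bullet> (B *v v) | B. unistochastic B}"
  proof (rule closed_segment_permutes_subset[OF finite_class.finite_UNIV])
    show "?\<sigma>min permutes UNIV" by (rule enum_transfer_permutes[OF eu' ev(1,2)])
    show "?\<sigma>max permutes UNIV" by (rule enum_transfer_permutes[OF eu' ev'])
  qed (use unistochastic_perm_matrix closed_segment_transposition_subset_unistochastic_values in blast)+
  ultimately show ?thesis
    by (auto simp: closed_segment_eq_real_ivl)
qed

theorem mainTheorem3:
  fixes u v :: "real^'n"
  shows "{u \<bullet> (B *v v) | B. unistochastic B} = {u \<bullet> (B *v v) | B. bistochastic B}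
       \<and> {u \<bullet> (B *v v) | B. bistochastic B}
           = {list_inner (entries_down u) (entries_up v) .. list_inner (entries_down u) (entries_down v)}"
proof -
  have "{u \<bullet> (B *v v) | B. unistochastic B} \<subseteq> {u \<bullet> (B *v v) | B. bistochastic B}"
    using unistochastic_imp_bistochastic by blast
  with bistochastic_values_subset_interval[of u v] interval_subset_unistochastic_values[of u v]
  show ?thesis by blast
qed

end
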